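(* Let $\mathcal{D}\in\mathbb{C}^{\mathbf{N}(s)\times\mathbf{N}(s)}$ with $\mathrm{ind}(\mathcal{D})=k$ and let $\mathcal{B}\in\mathbb{C}^{\mathbf{N}(s)}$. Then the set of all solutions $\mathcal{Z}\in\mathbb{C}^{\mathbf{N}(s)}$ of the multilinear system $\mathcal{D}^k*_s\mathcal{Z}=\mathcal{D}^k*_s\mathcal{D}^\dagger*_s\mathcal{B}$ is exactly $\{\mathcal{D}^{c,\dagger}*_s\mathcal{B}+(\mathcal{I}-\mathcal{D}^{c,\dagger}*_s\mathcal{D})*_s\mathcal{Q}:\ \mathcal{Q}\in\mathbb{C}^{\mathbf{N}(s)}\}$.
   Context: For positive integers $N_1,\dots,N_s$ write $\mathbf{N}(s)=N_1\times\cdots\times N_s$. For $\mathcal{A}\in\mathbb{C}^{\mathbf{I}(m)\times\mathbf{K}(p)}$ and $\mathcal{B}\in\mathbb{C}^{\mathbf{K}(p)\times\mathbf{J}(n)}$ the Einstein product is the tensor $\mathcal{A}*_p\mathcal{B}\in\mathbb{C}^{\mathbf{I}(m)\times\mathbf{J}(n)}$ with entries $(\mathcal{A}*_p\mathcal{B})_{i_1\dots i_m j_1\dots j_n}=\sum_{k_1,\dots,k_p}\mathcal{A}_{i_1\dots i_m k_1\dots k_p}\mathcal{B}_{k_1\dots k_p j_1\dots j_n}$; the case $n=0$ (so $\mathcal{B}\in\mathbb{C}^{\mathbf{K}(p)}$) is allowed. For $\mathcal{D}\in\mathbb{C}^{\mathbf{N}(s)\times\mathbf{N}(s)}$, powers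 are $\mathcal{D}^0=\mathcal{I}$, $\mathcal{D}^{j+1}=\mathcal{D}*_s\mathcal{D}^j$, where $\mathcal{I}$ is the identity tensor with entries $\mathcal{I}_{i_1\dots i_s j_1\dots j_s}=\prod_{t=1}^s\delta_{i_tj_t}$. The conjugate transpose $\mathcal{A}^*$ of $\mathcal{A}\in\mathbb{C}^{\mathbf{M}(m)\times\mathbf{N}(n)}$ has entries $(\mathcal{A}^* )_{j_1\dots j_n i_1\dots i_m}=\overline{\mathcal{A}_{i_1\dots i_m j_1\dots j_n}}$. For $\mathcal{A}\in\mathbb{C}^{\mathbf{M}(m)\times\mathbf{N}(n)}$, $\mathscr{R}(\mathcal{A})=\{\mathcal{A}*_n\mathcal{E}:\mathcal{E}\in\mathbb{C}^{\mathbf{N}(n)}\}$. The index $\mathrm{ind}(\mathcal{D})$ of $\mathcal{D}\in\mathbb{C}^{\mathbf{N}(s)\times\mathbf{N}(s)}$ is the smallest nonnegative integer $k$ with $\dim\mathscr{R}(\mathcal{D}^k)=\dim\mathscr{R}(\mathcal{D}^{k+1})$. The Moore–Penrose inverse $\mathcal{D}^\dagger$ of $\mathcal{D}\in\mathbb{C}^{\mathbf{N}(s)\times\mathbf{N}(s)}$ is the unique $\mathcal{Y}$ with $\mathcal{D}*_s\mathcal{Y}*_s\mathcal{D}=\mathcal{D}$, $\mathcal{Y}*_s\mathcal{D}*_s\mathcal{Y}=\mathcal{Y}$, $(\mathcal{D}*_s\mathcal{Y})^*=\mathcal{D}*_s\mathcal{Y}$, $(\mathcal{Y}*_s\mathcal{D})^*=\mathcal{Y}*_s\mathcal{D}$.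 With $k=\mathrm{ind}(\mathcal{D})$, the Drazin inverse $\mathcal{D}^{\mathrm D}$ is the unique $\mathcal{Y}$ with $\mathcal{Y}*_s\mathcal{D}^{k+1}=\mathcal{D}^k$, $\mathcal{Y}*_s\mathcal{D}*_s\mathcal{Y}=\mathcal{Y}$, $\mathcal{D}*_s\mathcal{Y}=\mathcal{Y}*_s\mathcal{D}$. The CMP inverse is $\mathcal{D}^{c,\dagger}=\mathcal{D}^\dagger*_s\mathcal{D}*_s\mathcal{D}^{\mathrm D}*_s\mathcal{D}*_s\mathcal{D}^\dagger$. *)

theory Defs
  imports "HOL-Analysis.Analysis" "HOL-Library.Function_Algebras"
begin

text \<open>Tensors of shape N(s) (N given as a list of dimensions [N_1,...,N_s]).
  Multi-indices are lists of naturals (0-based).  A tensor in C^{N(s) x N(s)}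
  is a function of two multi-indices, a tensor in C^{N(s)} a function of one
  multi-index; well-formed tensors vanish outside the index domain.\<close>

type_synonym tens2 = "nat list \<Rightarrow> nat list \<Rightarrow> complex"
type_synonym tens1 = "nat list \<Rightarrow> complex"

definition idx :: "nat list \<Rightarrow> nat list set" where
  "idx N = {is. length is = length N \<and> (\<forall>t<length N. is ! t < N ! t)}"

definition tensor2 :: "nat list \<Rightarrow> tens2 \<Rightarrow> bool" where
  "tensor2 N A \<longleftrightarrow> (\<forall>i j. (i \<notin> idx N \<or> j \<notin> idx N) \<longrightarrow> A i j = 0)"

definition tensor1 :: "nat list \<Rightarrow> tens1 \<Rightarrow> bool" where
  "tensor1 N E \<longleftrightarrow> (\<forall>i. i \<notin> idx N \<longrightarrow> E i = 0)"

definition ein :: "nat list \<Rightarrow> tens2 \<Rightarrow> tens2 \<Rightarrow> tens2" where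
  "ein N A B = (\<lambda>i j. if i \<in> idx N \<and> j \<in> idx N
      then \<Sum>k\<in>idx N. A i k * B k j else 0)"

definition einv :: "nat list \<Rightarrow> tens2 \<Rightarrow> tens1 \<Rightarrow> tens1" where
  "einv N A E = (\<lambda>i. if i \<in> idx N then \<Sum>k\<in>idx N. A i k * E k else 0)"

definition tid :: "nat list \<Rightarrow> tens2" where
  "tid N = (\<lambda>i j. if i \<in> idx N \<and> j \<in> idx N \<and> i = j then 1 else 0)"

definition tpow :: "nat list \<Rightarrow> tens2 \<Rightarrow> nat \<Rightarrow> tens2" where
  "tpow N D j = ((\<lambda>X. ein N D X) ^^ j) (tid N)"

definition tstar :: "tens2 \<Rightarrow> tens2" where
  "tstar A = (\<lambda>j i. cnj (A i j))"

definition tminus :: "tens2 \<Rightarrow> tens2 \<Rightarrow> tens2" where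
  "tminus A B = (\<lambda>i j. A i j - B i j)"

definition tadd1 :: "tens1 \<Rightarrow> tens1 \<Rightarrow> tens1" where
  "tadd1 E F = (\<lambda>i. E i + F i)"

definition trange :: "nat list \<Rightarrow> tens2 \<Rightarrow> tens1 set" where
  "trange N A = {einv N A E | E. tensor1 N E}"

definition cdim :: "tens1 set \<Rightarrow> nat" where
  "cdim S = vector_space.dim (\<lambda>(c::complex) (f::tens1). (\<lambda>x. c * f x)) S"

definition tind :: "nat list \<Rightarrow> tens2 \<Rightarrow> nat" where
  "tind N D = (LEAST k. cdim (trange N (tpow N D k)) = cdim (trange N (tpow N D (Suc k))))"

definition mpinv :: "nat list \<Rightarrow> tens2 \<Rightarrow> tens2" where
  "mpinv N D = (THE Y. tensor2 N Y \<and>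
      ein N (ein N D Y) D = D \<and> ein N (ein N Y D) Y = Y \<and>
      tstar (ein N D Y) = ein N D Y \<and> tstar (ein N Y D) = ein N Y D)"

definition drazin :: "nat list \<Rightarrow> tens2 \<Rightarrow> tens2" where
  "drazin N D = (let k = tind N D in THE Y. tensor2 N Y \<and>
      ein N Y (tpow N D (Suc k)) = tpow N D k \<and> ein N (ein N Y D) Y = Y \<and>
      ein N D Y = ein N Y D)"

definition cmp :: "nat list \<Rightarrow> tens2 \<Rightarrow> tens2" where
  "cmp N D = ein N (ein N (ein N (ein N (mpinv N D) D) (drazin N D)) D) (mpinv N D)"

end

theory Submission
  imports Defs
begin

text \<open>Write \<open>C = D\<^sup>\<dagger> D D\<^sup>D D D\<^sup>\<dagger>\<close>. From \<open>D D\<^sup>\<dagger> D = D\<close> and \<open>D\<^sup>D D\<^sup>k\<^sup>+\<^sup>1 = D\<^sup>k\<close> one gets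
  \<open>D\<^sup>k C = D\<^sup>k D\<^sup>\<dagger>\<close> and \<open>D\<^sup>k C D = D\<^sup>k\<close>, so \<open>C B\<close> solves the system and \<open>I - C D\<close> maps into
  the kernel of \<open>D\<^sup>k\<close>. Conversely \<open>D\<^sup>D D = (D\<^sup>D)\<^sup>k\<^sup>+\<^sup>1 D D\<^sup>k\<close>, so \<open>D\<^sup>D D\<close> only sees \<open>D\<^sup>k Z\<close>;
  hence \<open>C B = C D Z\<close> for every solution \<open>Z\<close>, i.e. \<open>Z = C B + (I - C D) Z\<close>.

  Since both inverses are defined by \<open>THE\<close>, their existence and uniqueness must be shown.
  Finite dimension gives \<open>D\<^sup>r = D\<^sup>r\<^sup>+\<^sup>1 P\<close> with \<open>P\<close> a polynomial in \<open>D\<close>; then \<open>D\<^sup>r P\<^sup>r\<^sup>+\<^sup>1\<close> is a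
  Drazin inverse, and for Hermitian \<open>D\<close> (where \<open>D\<^sup>*D X = 0\<close> forces \<open>D X = 0\<close>) one may take
  \<open>r = 1\<close>. The Moore--Penrose inverse of \<open>A\<close> is \<open>R A\<^sup>*\<close> with \<open>R\<close> the group inverse of \<open>A\<^sup>*A\<close>.\<close>

section \<open>Einstein product algebra\<close>

lemma finite_idx: "finite (idx N)"
proof (rule finite_subset)
  show "idx N \<subseteq> {xs. set xs \<subseteq> {..<Max (set N)} \<and> length xs = length N}"
    by (clarsimp simp: idx_def in_set_conv_nth) (meson List.finite_set Max_ge nth_mem order_less_le_trans)
  show "finite {xs. set xs \<subseteq> {..<Max (set N)} \<and> length xs = length N}"
    by (rule finite_lists_length_eq) simp
qed

lemma sum_apply: "(\<Sum>x\<in>A. f x) i = (\<Sum>x\<in>A. f x i)"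
  by (induction A rule: infinite_finite_induct) auto

lemma ein_assoc: "ein N (ein N A B) C = ein N A (ein N B C)"
proof (intro ext)
  fix i j
  show "ein N (ein N A B) C i j = ein N A (ein N B C) i j"
    unfolding ein_def
    using sum.swap[of "\<lambda>x y. A i y * (B y x * C x j)" "idx N" "idx N"]
    by (simp add: sum_distrib_left sum_distrib_right mult.assoc cong: sum.cong)
qed

lemma einv_ein: "einv N (ein N A B) E = einv N A (einv N B E)"
proof (intro ext)
  fix i
  show "einv N (ein N A B) E i = einv N A (einv N B E) i"
    unfolding ein_def einv_def
    using sum.swap[of "\<lambda>x y. A i y * (B y x * E x)" "idx N" "idx N"]
    by (simp add: sum_distrib_left sum_distrib_right mult.assoc cong: sum.cong)
qed

lemma tensor2_ein [simp]: "tensor2 N (ein N A B)"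
  by (auto simp: tensor2_def ein_def)

lemma tensor1_einv [simp]: "tensor1 N (einv N A E)"
  by (auto simp: tensor1_def einv_def)

lemma tensor2_tid [simp]: "tensor2 N (tid N)"
  by (auto simp: tensor2_def tid_def)

lemma tensor1_tadd1: "tensor1 N E \<Longrightarrow> tensor1 N F \<Longrightarrow> tensor1 N (tadd1 E F)"
  by (auto simp: tensor1_def tadd1_def)

lemma ein_tid_left: "tensor2 N A \<Longrightarrow> ein N (tid N) A = A"
  by (auto simp: fun_eq_iff ein_def tid_def tensor2_def finite_idx if_distrib[of "\<lambda>x. x * _"] cong: if_cong)

lemma ein_tid_right: "tensor2 N A \<Longrightarrow> ein N A (tid N) = A"
  by (auto simp: fun_eq_iff ein_def tid_def tensor2_def finite_idx if_distrib[of "\<lambda>x. _ * x"] cong: if_cong)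

lemma einv_tid: "tensor1 N E \<Longrightarrow> einv N (tid N) E = E"
  by (auto simp: fun_eq_iff einv_def tid_def tensor1_def finite_idx if_distrib[of "\<lambda>x. x * _"] cong: if_cong)

lemma ein_zero_right [simp]: "ein N A 0 = 0"
  by (auto simp: fun_eq_iff ein_def)

lemma einv_zero_left [simp]: "einv N 0 E = 0"
  by (auto simp: fun_eq_iff einv_def)

lemma tstar_ein: "tstar (ein N A B) = ein N (tstar B) (tstar A)"
  by (auto simp: fun_eq_iff ein_def tstar_def mult.commute)

lemma tstar_tstar [simp]: "tstar (tstar A) = A"
  by (simp add: tstar_def)

lemma tensor2_tstar: "tensor2 N A \<Longrightarrow> tensor2 N (tstar A)"
  by (auto simp: tensor2_def tstar_def)

lemma tstar_tid [simp]: "tstar (tid N) = tid N"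
  by (auto simp: fun_eq_iff tstar_def tid_def)

lemma ein_tminus_right: "ein N C (tminus A B) = tminus (ein N C A) (ein N C B)"
  by (auto simp: fun_eq_iff ein_def tminus_def algebra_simps sum_subtractf)

lemma einv_tminus: "einv N (tminus A B) E = (\<lambda>i. einv N A E i - einv N B E i)"
  by (auto simp: fun_eq_iff einv_def tminus_def algebra_simps sum_subtractf)

lemma einv_tadd1: "einv N A (tadd1 E F) = tadd1 (einv N A E) (einv N A F)"
  by (auto simp: fun_eq_iff einv_def tadd1_def algebra_simps sum.distrib)

lemma ein_sum_right: "ein N X (\<lambda>a b. \<Sum>i\<in>I. f i * Y i a b) = (\<lambda>a b. \<Sum>i\<in>I. f i * ein N X (Y i) a b)"
proof (intro ext)
  fix a b
  show "ein N X (\<lambda>a b. \<Sum>i\<in>I. f i * Y i a b) a b = (\<Sum>i\<in>I. f i * ein N X (Y i) a b)"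
    unfolding ein_def
    using sum.swap[of "\<lambda>k i. X a k * (f i * Y i k b)" I "idx N"]
    by (auto simp: sum_distrib_left mult.left_commute)
qed

lemma ein_sum_left: "ein N (\<lambda>a b. \<Sum>i\<in>I. f i * Y i a b) X = (\<lambda>a b. \<Sum>i\<in>I. f i * ein N (Y i) X a b)"
proof (intro ext)
  fix a b
  show "ein N (\<lambda>a b. \<Sum>i\<in>I. f i * Y i a b) X a b = (\<Sum>i\<in>I. f i * ein N (Y i) X a b)"
    unfolding ein_def
    using sum.swap[of "\<lambda>k i. f i * Y i a k * X k b" I "idx N"]
    by (auto simp: sum_distrib_left sum_distrib_right mult.assoc)
qed

lemma tminus_eq_0_iff: "tminus A B = 0 \<longleftrightarrow> A = B"
  by (simp add: fun_eq_iff tminus_def)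

lemma tpow_0 [simp]: "tpow N D 0 = tid N"
  by (simp add: tpow_def)

lemma tpow_Suc: "tpow N D (Suc j) = ein N D (tpow N D j)"
  by (simp add: tpow_def)

lemma tensor2_tpow [simp]: "tensor2 N (tpow N D j)"
  by (cases j) (auto simp: tpow_Suc)

lemma tpow_add: "tpow N D (a + b) = ein N (tpow N D a) (tpow N D b)"
  by (induction a) (auto simp: tpow_Suc ein_tid_left ein_assoc)

lemma tpow_Suc_right: "tensor2 N D \<Longrightarrow> tpow N D (Suc j) = ein N (tpow N D j) D"
  using tpow_add[of N D j 1] by (simp add: tpow_Suc ein_tid_right)

lemma ein_tpow_commute_self: "tensor2 N A \<Longrightarrow> ein N A (tpow N A j) = ein N (tpow N A j) A"
  by (simp add: tpow_Suc[symmetric] tpow_Suc_right[symmetric])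

lemma ein_tpow_commute:
  assumes "tensor2 N A" "tensor2 N B" "ein N A B = ein N B A"
  shows "ein N (tpow N A j) B = ein N B (tpow N A j)"
proof (induction j)
  case 0
  then show ?case using assms by (simp add: ein_tid_left ein_tid_right)
next
  case (Suc j)
  have "ein N (tpow N A (Suc j)) B = ein N A (ein N B (tpow N A j))"
    by (simp add: tpow_Suc ein_assoc Suc)
  also have "\<dots> = ein N B (tpow N A (Suc j))"
    by (simp add: assms(3) ein_assoc[symmetric] tpow_Suc)
  finally show ?case .
qed

lemma ein_tpow_tpow_commute:
  assumes "tensor2 N A" "tensor2 N B" "ein N A B = ein N B A"
  shows "ein N (tpow N A i) (tpow N B j) = ein N (tpow N B j) (tpow N A i)"
  using ein_tpow_commute[OF assms(2) tensor2_tpow ein_tpow_commute[OF assms, symmetric]] by simp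

text \<open>The diagonal of \<open>A\<^sup>* *\<^sub>s A\<close> holds the squared column norms of \<open>A\<close>.\<close>

lemma tstar_ein_self_eq_0:
  assumes M: "tensor2 N M" and z: "ein N (tstar M) M = 0"
  shows "M = 0"
proof (intro ext)
  fix a b
  show "M a b = 0 a b"
  proof (cases "a \<in> idx N \<and> b \<in> idx N")
    case False
    then show ?thesis using M by (auto simp: tensor2_def)
  next
    case True
    have "(\<Sum>k\<in>idx N. cnj (M k b) * M k b) = 0"
      using True fun_cong[OF fun_cong[OF z, of b], of b] by (simp add: ein_def tstar_def)
    then have "complex_of_real (\<Sum>k\<in>idx N. (cmod (M k b))\<^sup>2) = 0"
      unfolding of_real_sum complex_norm_square by (simp add: mult.commute)
    then have "(\<Sum>k\<in>idx N. (cmod (M k b))\<^sup>2) = 0"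
      by (simp only: of_real_eq_0_iff)
    then have "\<forall>k\<in>idx N. (cmod (M k b))\<^sup>2 = 0"
      by (simp add: sum_nonneg_eq_0_iff finite_idx)
    then show ?thesis using True by simp
  qed
qed

lemma ein_tstar_cancel:
  assumes "tensor2 N A" "ein N (ein N (tstar A) A) W = 0"
  shows "ein N A W = 0"
proof (rule tstar_ein_self_eq_0)
  have "ein N (tstar (ein N A W)) (ein N A W) = ein N (tstar W) (ein N (ein N (tstar A) A) W)"
    by (simp add: tstar_ein ein_assoc)
  then show "ein N (tstar (ein N A W)) (ein N A W) = 0"
    using assms(2) by simp
qed simp

lemma ein_tpow_hermitian_cancel:
  assumes B: "tensor2 N B" "tstar B = B"
  shows "ein N (tpow N B (Suc j)) X = 0 \<Longrightarrow> ein N B X = 0"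
proof (induction j)
  case 0
  then show ?case using B by (simp add: tpow_Suc ein_tid_right)
next
  case (Suc j)
  have "ein N (ein N (tstar B) B) (ein N (tpow N B j) X) = ein N (tpow N B (Suc (Suc j))) X"
    using B(2) by (simp add: tpow_Suc ein_assoc)
  then have "ein N B (ein N (tpow N B j) X) = 0"
    using Suc.prems by (intro ein_tstar_cancel[OF B(1)]) argo
  then show ?case using Suc.IH by (simp add: tpow_Suc ein_assoc)
qed

section \<open>Ranges and dimension\<close>

interpretation tens2_space: vector_space "\<lambda>(c::complex) (X::tens2) i j. c * X i j"
  by unfold_locales (auto simp: fun_eq_iff algebra_simps)

interpretation tens1_space: vector_space "\<lambda>(c::complex) (f::tens1) x. c * f x"
  by unfold_locales (auto simp: fun_eq_iff algebra_simps)

context vector_space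
begin

lemma ex_vanishing_combination:
  assumes "finite T" "card T \<le> m" "\<And>i. i \<le> m \<Longrightarrow> f i \<in> span T"
  shows "\<exists>c. (\<exists>i\<le>m. c i \<noteq> 0) \<and> (\<Sum>i\<le>m. scale (c i) (f i)) = 0"
proof (cases "inj_on f {..m}")
  case True
  have "f ` {..m} \<subseteq> span T"
    using assms(3) by auto
  moreover have "card T < card (f ` {..m})"
    using True assms(2) by (simp add: card_image)
  ultimately have "dependent (f ` {..m})"
    using independent_span_bound[OF assms(1)] by (meson not_le)
  then obtain u where "\<exists>v\<in>f ` {..m}. u v \<noteq> 0" "(\<Sum>v\<in>f ` {..m}. scale (u v) v) = 0"
    by (auto simp: dependent_finite)
  then show ?thesis
    by (intro exI[of _ "u \<circ> f"]) (auto simp: sum.reindex[OF True])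
next
  case False
  then obtain a b where ab: "a \<le> m" "b \<le> m" "a \<noteq> b" "f a = f b"
    by (auto simp: inj_on_def)
  define c :: "nat \<Rightarrow> 'a" where "c i = (if i = a then 1 else if i = b then -1 else 0)" for i
  have "(\<Sum>i\<le>m. scale (c i) (f i)) = (\<Sum>i\<in>{a, b}. scale (c i) (f i))"
    using ab by (intro sum.mono_neutral_right) (auto simp: c_def)
  also have "\<dots> = 0"
    using ab by (simp add: c_def)
  finally show ?thesis
    using ab by (intro exI[of _ c]) (auto simp: c_def)
qed

lemma subspace_eq_if_dim_eq:
  assumes "subspace U" "U \<subseteq> V" "V \<subseteq> span T" "finite T" "dim U = dim V"
  shows "U = V"
proof (rule ccontr)
  assume "U \<noteq> V"
  then obtain v where v: "v \<in> V" "v \<notin> U"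
    using assms(2) by auto
  obtain B where B: "B \<subseteq> U" "independent B" "U \<subseteq> span B" "card B = dim U"
    using basis_exists by blast
  obtain B' where B': "B' \<subseteq> V" "independent B'" "V \<subseteq> span B'" "card B' = dim V"
    using basis_exists by blast
  have "finite B" "finite B'"
    using independent_span_bound[OF assms(4) B(2)] independent_span_bound[OF assms(4) B'(2)]
      B(1) B'(1) assms(2,3) by blast+
  have "span B \<subseteq> U"
    using B(1) assms(1) by (rule span_minimal)
  then have "v \<notin> span B"
    using v by auto
  then have "independent (insert v B)"
    using B(2) by (rule independent_insertI)
  moreover have "insert v B \<subseteq> span B'"
    using B(1) B'(3) assms(2) v(1) by (auto intro: span_base)
  ultimately have "card (insert v B) \<le> card B'"
    using independent_span_bound[OF \<open>finite B'\<close>] by blast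
  moreover have "card (insert v B) = Suc (card B)"
    using \<open>finite B\<close> \<open>v \<notin> span B\<close> span_base by (metis card_insert_disjoint)
  ultimately show False
    using B(4) B'(4) assms(5) by simp
qed

end

lemma tensor1_in_span:
  assumes "tensor1 N E"
  shows "E \<in> tens1_space.span ((\<lambda>a x. if x = a then 1 else 0) ` idx N)"
proof -
  have "E = (\<Sum>a\<in>idx N. (\<lambda>x. E a * (if x = a then 1 else 0)))"
    using assms
    by (auto simp: fun_eq_iff sum_apply tensor1_def finite_idx if_distrib[of "\<lambda>x. _ * x"] cong: if_cong)
  also have "\<dots> \<in> tens1_space.span ((\<lambda>a x. if x = a then 1 else 0) ` idx N)"
    by (intro tens1_space.span_sum tens1_space.span_scale tens1_space.span_base) auto
  finally show ?thesis .
qed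

lemma tensor2_in_span:
  assumes "tensor2 N X"
  shows "X \<in> tens2_space.span ((\<lambda>p i j. if (i, j) = p then 1 else 0) ` (idx N \<times> idx N))"
proof -
  have "X = (\<Sum>p\<in>idx N \<times> idx N. (\<lambda>i j. X (fst p) (snd p) * (if (i, j) = p then 1 else 0)))"
    using assms
    by (auto simp: fun_eq_iff sum_apply tensor2_def finite_idx if_distrib[of "\<lambda>x. _ * x"] cong: if_cong)
  also have "\<dots> \<in> tens2_space.span ((\<lambda>p i j. if (i, j) = p then 1 else 0) ` (idx N \<times> idx N))"
    by (intro tens2_space.span_sum tens2_space.span_scale tens2_space.span_base) auto
  finally show ?thesis .
qed

lemma trange_subspace: "tens1_space.subspace (trange N A)"
  unfolding tens1_space.subspace_def
proof (intro conjI ballI allI)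
  show "0 \<in> trange N A"
    unfolding trange_def by (intro CollectI exI[of _ 0]) (auto simp: tensor1_def einv_def fun_eq_iff)
next
  fix x y
  assume "x \<in> trange N A" "y \<in> trange N A"
  then obtain E F where "tensor1 N E" "tensor1 N F" "x = einv N A E" "y = einv N A F"
    by (auto simp: trange_def)
  then show "x + y \<in> trange N A"
    unfolding trange_def
    by (intro CollectI exI[of _ "E + F"]) (auto simp: tensor1_def einv_def fun_eq_iff sum.distrib algebra_simps)
next
  fix c x
  assume "x \<in> trange N A"
  then obtain E where "tensor1 N E" "x = einv N A E"
    by (auto simp: trange_def)
  then show "(\<lambda>i. c * x i) \<in> trange N A"
    unfolding trange_def
    by (intro CollectI exI[of _ "\<lambda>i. c * E i"]) (auto simp: tensor1_def einv_def fun_eq_iff sum_distrib_left algebra_simps)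
qed

lemma trange_ein_subset: "trange N (ein N A B) \<subseteq> trange N A"
  by (auto simp: trange_def einv_ein)

lemma ex_ein_eq_if_trange_subset:
  assumes A: "tensor2 N A" and sub: "trange N A \<subseteq> trange N B"
  shows "\<exists>W. tensor2 N W \<and> A = ein N B W"
proof -
  let ?e = "\<lambda>j x. if x = j then 1 else 0 :: complex"
  have "\<exists>w. tensor1 N w \<and> einv N A (?e j) = einv N B w" if "j \<in> idx N" for j
  proof -
    have "einv N A (?e j) \<in> trange N A"
      using that unfolding trange_def by (auto simp: tensor1_def)
    then show ?thesis
      using sub by (auto simp: trange_def)
  qed
  then obtain w where w: "\<And>j. j \<in> idx N \<Longrightarrow> tensor1 N (w j) \<and> einv N A (?e j) = einv N B (w j)"
    by metis
  define W where "W i j = (if j \<in> idx N then w j i else 0)" for i j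
  have "tensor2 N W"
    using w by (auto simp: tensor2_def W_def tensor1_def)
  moreover have "A i j = ein N B W i j" for i j
  proof (cases "i \<in> idx N \<and> j \<in> idx N")
    case False
    then show ?thesis using A by (auto simp: tensor2_def ein_def)
  next
    case True
    then have "A i j = einv N A (?e j) i"
      by (simp add: einv_def finite_idx if_distrib[of "\<lambda>x. _ * x"] cong: if_cong)
    also have "\<dots> = ein N B W i j"
      using w True by (simp add: ein_def einv_def W_def)
    finally show ?thesis .
  qed
  ultimately show ?thesis
    by blast
qed

lemma tpow_eq_ein_tpow_Suc_if_cdim_eq:
  assumes D: "tensor2 N D"
    and dim: "cdim (trange N (tpow N D j)) = cdim (trange N (tpow N D (Suc j)))"
  shows "\<exists>W. tensor2 N W \<and> tpow N D j = ein N (tpow N D (Suc j)) W"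
proof (rule ex_ein_eq_if_trange_subset)
  have "trange N (tpow N D (Suc j)) \<subseteq> trange N (tpow N D j)"
    using trange_ein_subset by (simp add: tpow_Suc_right[OF D])
  moreover have "trange N (tpow N D j) \<subseteq> tens1_space.span ((\<lambda>a x. if x = a then 1 else 0) ` idx N)"
    using tensor1_in_span by (auto simp: trange_def)
  ultimately show "trange N (tpow N D j) \<subseteq> trange N (tpow N D (Suc j))"
    using tens1_space.subspace_eq_if_dim_eq[OF trange_subspace] dim finite_idx
    by (metis cdim_def finite_imageI)
qed simp

lemma ex_tpow_linear_relation:
  "\<exists>c. (\<exists>i\<le>card (idx N \<times> idx N). c i \<noteq> 0) \<and>
     (\<forall>a b. (\<Sum>i\<le>card (idx N \<times> idx N). c i * tpow N A i a b) = 0)"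
proof -
  let ?U = "(\<lambda>p i j. if (i, j) = p then 1 else 0) ` (idx N \<times> idx N)"
  have "finite ?U"
    by (simp add: finite_idx)
  moreover have "card ?U \<le> card (idx N \<times> idx N)"
    by (rule card_image_le) (simp add: finite_idx)
  moreover have "tpow N A i \<in> tens2_space.span ?U" for i
    by (rule tensor2_in_span) simp
  ultimately obtain c where c: "\<exists>i\<le>card (idx N \<times> idx N). c i \<noteq> 0"
    and rel: "(\<Sum>i\<le>card (idx N \<times> idx N). (\<lambda>a b. c i * tpow N A i a b)) = 0"
    using tens2_space.ex_vanishing_combination by blast
  have "(\<Sum>i\<le>card (idx N \<times> idx N). c i * tpow N A i a b) = 0" for a b
    using fun_cong[OF fun_cong[OF rel, of a], of b] by (simp add: sum_apply)
  then show ?thesis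
    using c by blast
qed

text \<open>Dividing the relation by its lowest nonzero coefficient \<open>c\<^sub>r\<close> expresses \<open>A\<^sup>r\<close> as
  \<open>A\<^sup>r\<^sup>+\<^sup>1\<close> times a polynomial in \<open>A\<close>.\<close>

lemma ex_tpow_eq_ein_tpow_Suc:
  assumes A: "tensor2 N A"
  shows "\<exists>r P. tensor2 N P \<and> ein N A P = ein N P A \<and> tpow N A r = ein N (tpow N A (Suc r)) P"
proof -
  define m where "m = card (idx N \<times> idx N)"
  obtain c where c: "\<exists>i\<le>m. c i \<noteq> 0" and rel: "\<And>a b. (\<Sum>i\<le>m. c i * tpow N A i a b) = 0"
    using ex_tpow_linear_relation unfolding m_def by blast
  define r where "r = (LEAST i. c i \<noteq> 0)"
  have r: "r \<le> m" "c r \<noteq> 0"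
    using c LeastI_ex[of "\<lambda>i. c i \<noteq> 0"] Least_le[of "\<lambda>i. c i \<noteq> 0"] by (auto simp: r_def intro: order_trans)
  have below: "i < r \<Longrightarrow> c i = 0" for i
    using not_less_Least by (auto simp: r_def)
  define P where "P a b = (\<Sum>i\<in>{Suc r..m}. - (c i / c r) * tpow N A (i - Suc r) a b)" for a b
  have "tpow N A r a b = (\<Sum>i\<in>{Suc r..m}. - (c i / c r) * tpow N A i a b)" for a b
  proof -
    have "0 = (\<Sum>i\<le>m. c i * tpow N A i a b)"
      using rel by simp
    also have "\<dots> = (\<Sum>i\<in>{r..m}. c i * tpow N A i a b)"
      using below by (intro sum.mono_neutral_right) (auto simp: not_le)
    also have "\<dots> = c r * tpow N A r a b + (\<Sum>i\<in>{Suc r..m}. c i * tpow N A i a b)"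
      using r(1) by (simp add: sum.atLeast_Suc_atMost)
    finally have "tpow N A r a b = - (\<Sum>i\<in>{Suc r..m}. c i * tpow N A i a b) / c r"
      using r(2) by (simp add: field_simps add_eq_0_iff)
    then show ?thesis
      by (simp add: sum_divide_distrib sum_negf)
  qed
  moreover have "ein N (tpow N A (Suc r)) P a b = (\<Sum>i\<in>{Suc r..m}. - (c i / c r) * tpow N A i a b)" for a b
    unfolding P_def ein_sum_right by (intro sum.cong refl) (simp add: tpow_add[symmetric])
  ultimately have "tpow N A r = ein N (tpow N A (Suc r)) P"
    by (simp add: fun_eq_iff)
  moreover have "ein N A P = ein N P A"
    unfolding P_def ein_sum_right ein_sum_left using A by (simp add: ein_tpow_commute_self)
  moreover have "tensor2 N P"
    using tensor2_tpow[of N A] by (auto simp: tensor2_def P_def)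
  ultimately show ?thesis
    by blast
qed

section \<open>The Drazin inverse\<close>

definition is_drazin :: "nat list \<Rightarrow> tens2 \<Rightarrow> nat \<Rightarrow> tens2 \<Rightarrow> bool" where
  "is_drazin N D k Y \<longleftrightarrow> tensor2 N Y \<and>
      ein N Y (tpow N D (Suc k)) = tpow N D k \<and> ein N (ein N Y D) Y = Y \<and>
      ein N D Y = ein N Y D"

lemma tpow_eq_ein_tpow_add:
  assumes W: "tpow N D k = ein N (tpow N D (Suc k)) W"
  shows "tpow N D k = ein N (tpow N D (k + j)) (tpow N W j)"
proof (induction j)
  case 0
  then show ?case by (simp add: ein_tid_right)
next
  case (Suc j)
  have "ein N (tpow N D (k + Suc j)) (tpow N W (Suc j))
      = ein N (tpow N D j) (ein N (ein N (tpow N D (Suc k)) W) (tpow N W j))"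
    by (simp only: add.commute[of k] add_Suc_shift tpow_add[of N D j "Suc k"] tpow_Suc[of N W j] ein_assoc)
  also have "\<dots> = ein N (tpow N D (k + j)) (tpow N W j)"
    by (simp only: W[symmetric] add.commute[of k] tpow_add[of N D j k] ein_assoc)
  finally show ?case
    using Suc.IH by simp
qed

lemma is_drazin_ein_tpow:
  assumes D: "tensor2 N D" and P: "tensor2 N P" "ein N D P = ein N P D"
    and fac: "tpow N D r = ein N (tpow N D (Suc r)) P"
  shows "is_drazin N D r (ein N (tpow N D r) (tpow N P (Suc r)))" (is "is_drazin N D r ?G")
proof -
  have PD: "ein N (tpow N P a) (tpow N D b) = ein N (tpow N D b) (tpow N P a)" for a b
    using ein_tpow_tpow_commute[OF P(1) D P(2)[symmetric]] .
  have G1: "ein N ?G (tpow N D (Suc r)) = tpow N D r"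
  proof -
    have "ein N ?G (tpow N D (Suc r)) = ein N (tpow N D (r + Suc r)) (tpow N P (Suc r))"
      by (simp only: ein_assoc PD tpow_add)
    also have "\<dots> = tpow N D r"
      by (rule tpow_eq_ein_tpow_add[OF fac, symmetric])
    finally show ?thesis .
  qed
  have "ein N D ?G = ein N ?G D"
    using ein_tpow_commute[OF P(1) D P(2)[symmetric], of "Suc r"]
    by (simp add: ein_assoc[symmetric] ein_tpow_commute_self[OF D]) (simp add: ein_assoc)
  moreover have "ein N (ein N ?G D) ?G = ?G"
    using G1 by (simp add: ein_assoc tpow_Suc) (simp add: ein_assoc[symmetric])
  ultimately show ?thesis
    using G1 by (simp add: is_drazin_def)
qed

text \<open>\<open>G D\<close> fixes \<open>D\<^sup>r\<close>, hence \<open>D\<^sup>k\<^sup>+\<^sup>r\<close>, hence \<open>D\<^sup>k = D\<^sup>k\<^sup>+\<^sup>r W\<^sup>r\<close>: the same \<open>G\<close> serves every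
  exponent from which on the powers of \<open>D\<close> factor through the next one.\<close>

lemma is_drazin_if_tpow_factor:
  assumes D: "tensor2 N D" and G: "is_drazin N D r G"
    and W: "tpow N D k = ein N (tpow N D (Suc k)) W"
  shows "is_drazin N D k G"
proof -
  define E where "E = ein N G D"
  have G': "tensor2 N G" "ein N D G = ein N G D"
    using G by (auto simp: is_drazin_def)
  have "ein N E D = ein N D E"
    using G'(2) by (simp add: E_def) (metis ein_assoc)
  then have E_comm: "ein N E (tpow N D j) = ein N (tpow N D j) E" for j
    using ein_tpow_commute[OF D] by (metis E_def tensor2_ein)
  have E_fix_r: "ein N E (tpow N D r) = tpow N D r"
    using G by (simp add: is_drazin_def E_def ein_assoc tpow_Suc)
  have "ein N E (tpow N D (k + r)) = ein N (ein N E (tpow N D k)) (tpow N D r)"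
    by (simp only: tpow_add ein_assoc)
  also have "\<dots> = tpow N D (k + r)"
    by (simp only: E_comm[of k] ein_assoc E_fix_r tpow_add)
  finally have E_fix: "ein N E (tpow N D (k + r)) = tpow N D (k + r)" .
  have "ein N G (tpow N D (Suc k)) = ein N E (tpow N D k)"
    by (simp add: E_def tpow_Suc ein_assoc)
  also have "\<dots> = ein N E (ein N (tpow N D (k + r)) (tpow N W r))"
    by (subst tpow_eq_ein_tpow_add[OF W]) (rule refl)
  also have "\<dots> = tpow N D k"
    by (simp only: ein_assoc[symmetric] E_fix) (rule tpow_eq_ein_tpow_add[OF W, symmetric])
  finally show ?thesis
    using G by (simp add: is_drazin_def)
qed

lemma eq_ein_tpow_if_outer_inverse:
  assumes X: "tensor2 N X" and D: "tensor2 N D"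
    and outer: "ein N (ein N X D) X = X" and comm: "ein N D X = ein N X D"
  shows "X = ein N (tpow N X (Suc j)) (tpow N D j)"
proof (induction j)
  case 0
  then show ?case using X by (simp add: tpow_Suc ein_tid_right)
next
  case (Suc j)
  have "ein N (tpow N X (Suc (Suc j))) (tpow N D (Suc j))
      = ein N X (ein N (ein N (tpow N X (Suc j)) (tpow N D j)) D)"
    by (simp only: tpow_Suc[of N X "Suc j"] tpow_Suc_right[OF D, of j] ein_assoc)
  also have "\<dots> = X"
    using outer comm by (simp flip: Suc.IH add: ein_assoc)
  finally show ?case
    by simp
qed

lemma is_drazin_unique:
  assumes D: "tensor2 N D" and X: "is_drazin N D k X" and Y: "is_drazin N D k Y"
  shows "X = Y"
proof -
  have tX: "tensor2 N X" and x1: "ein N X (tpow N D (Suc k)) = tpow N D k"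
    and x2: "ein N (ein N X D) X = X" and x3: "ein N D X = ein N X D"
    using X by (auto simp: is_drazin_def)
  have tY: "tensor2 N Y" and y1: "ein N Y (tpow N D (Suc k)) = tpow N D k"
    and y2: "ein N (ein N Y D) Y = Y" and y3: "ein N D Y = ein N Y D"
    using Y by (auto simp: is_drazin_def)
  have Xpow: "X = ein N (tpow N X (Suc k)) (tpow N D k)"
    by (rule eq_ein_tpow_if_outer_inverse[OF tX D x2 x3])
  have Ypow: "Y = ein N (tpow N D k) (tpow N Y (Suc k))"
    using eq_ein_tpow_if_outer_inverse[OF tY D y2 y3] ein_tpow_tpow_commute[OF tY D y3[symmetric]]
    by metis
  have "ein N (tpow N D k) (ein N D Y) = tpow N D k"
    using ein_tpow_commute[OF D tY y3, of "Suc k"] y1 by (simp add: tpow_Suc_right[OF D] ein_assoc)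
  then have "X = ein N (tpow N X (Suc k)) (ein N (tpow N D k) (ein N D Y))"
    using Xpow by simp
  also have "\<dots> = ein N X (ein N D Y)"
    by (simp only: ein_assoc[symmetric] Xpow[symmetric])
  finally have "X = ein N X (ein N D Y)" .
  moreover have "Y = ein N X (ein N D Y)"
  proof -
    have "Y = ein N (tpow N D k) (tpow N Y (Suc k))"
      by (rule Ypow)
    also have "\<dots> = ein N X (ein N D (ein N (tpow N D k) (tpow N Y (Suc k))))"
      by (subst (1) x1[symmetric]) (simp only: tpow_Suc ein_assoc)
    finally show ?thesis
      by (simp only: Ypow[symmetric])
  qed
  ultimately show ?thesis
    by simp
qed

lemma tpow_tind_factor:
  assumes D: "tensor2 N D"
  shows "\<exists>W. tensor2 N W \<and> tpow N D (tind N D) = ein N (tpow N D (Suc (tind N D))) W"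
proof (rule tpow_eq_ein_tpow_Suc_if_cdim_eq[OF D])
  obtain r P where "tpow N D r = ein N (tpow N D (Suc r)) P"
    using ex_tpow_eq_ein_tpow_Suc[OF D] by blast
  then have "trange N (tpow N D r) \<subseteq> trange N (tpow N D (Suc r))"
    using trange_ein_subset by metis
  moreover have "trange N (tpow N D (Suc r)) \<subseteq> trange N (tpow N D r)"
    using trange_ein_subset by (simp add: tpow_Suc_right[OF D])
  ultimately have "cdim (trange N (tpow N D r)) = cdim (trange N (tpow N D (Suc r)))"
    by (simp add: subset_antisym)
  then show "cdim (trange N (tpow N D (tind N D))) = cdim (trange N (tpow N D (Suc (tind N D))))"
    unfolding tind_def by (rule LeastI)
qed

lemma is_drazin_drazin:
  assumes D: "tensor2 N D"
  shows "is_drazin N D (tind N D) (drazin N D)"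
proof -
  obtain r P where "tensor2 N P" "ein N D P = ein N P D" "tpow N D r = ein N (tpow N D (Suc r)) P"
    using ex_tpow_eq_ein_tpow_Suc[OF D] by blast
  then have "is_drazin N D r (ein N (tpow N D r) (tpow N P (Suc r)))"
    by (rule is_drazin_ein_tpow[OF D])
  then have "\<exists>G. is_drazin N D (tind N D) G"
    using is_drazin_if_tpow_factor[OF D] tpow_tind_factor[OF D] by blast
  then have "\<exists>!G. is_drazin N D (tind N D) G"
    using is_drazin_unique[OF D] by blast
  then show ?thesis
    unfolding drazin_def Let_def is_drazin_def[symmetric] by (rule theI')
qed

section \<open>The Moore--Penrose inverse\<close>

lemma tstar_tpow: "tensor2 N D \<Longrightarrow> tstar (tpow N D j) = tpow N (tstar D) j"
  by (induction j) (simp_all add: tpow_Suc tstar_ein ein_tpow_commute_self tensor2_tstar)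

lemma is_drazin_tstar:
  assumes D: "tensor2 N D" and G: "is_drazin N D k G"
  shows "is_drazin N (tstar D) k (tstar G)"
proof -
  have G': "tensor2 N G" "ein N G (tpow N D (Suc k)) = tpow N D k"
    "ein N (ein N G D) G = G" "ein N D G = ein N G D"
    using G by (auto simp: is_drazin_def)
  have "ein N (tpow N D (Suc k)) G = tpow N D k"
    using ein_tpow_commute[OF D G'(1) G'(4)] G'(2) by simp
  then have "ein N (tstar G) (tpow N (tstar D) (Suc k)) = tpow N (tstar D) k"
    using arg_cong[of _ _ tstar] by (metis D tstar_ein tstar_tpow)
  moreover have "ein N (ein N (tstar G) (tstar D)) (tstar G) = tstar G"
    using arg_cong[OF G'(3), of tstar] by (simp add: tstar_ein ein_assoc)
  moreover have "ein N (tstar D) (tstar G) = ein N (tstar G) (tstar D)"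
    using arg_cong[OF G'(4), of tstar] by (simp add: tstar_ein)
  ultimately show ?thesis
    using G'(1) by (simp add: is_drazin_def tensor2_tstar)
qed

lemma ex_hermitian_group_inverse:
  assumes B: "tensor2 N B" "tstar B = B"
  shows "\<exists>R. is_drazin N B 1 R \<and> tstar R = R"
proof -
  obtain r P where P: "tensor2 N P" "ein N B P = ein N P B"
    and fac: "tpow N B r = ein N (tpow N B (Suc r)) P"
    using ex_tpow_eq_ein_tpow_Suc[OF B(1)] by blast
  have "tpow N B (Suc r) = ein N B (ein N (tpow N B (Suc r)) P)"
    using fac by (simp add: tpow_Suc)
  also have "\<dots> = ein N (tpow N B (Suc r)) (ein N B P)"
    by (simp add: ein_tpow_commute_self[OF B(1)] flip: ein_assoc)
  finally have "ein N (tpow N B (Suc r)) (tminus (tid N) (ein N B P)) = 0"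
    by (simp add: ein_tminus_right ein_tid_right tminus_eq_0_iff)
  then have "ein N B (tminus (tid N) (ein N B P)) = 0"
    by (rule ein_tpow_hermitian_cancel[OF B])
  then have "tpow N B 1 = ein N (tpow N B (Suc 1)) P"
    by (simp add: ein_tminus_right ein_tid_right[OF B(1)] tminus_eq_0_iff tpow_Suc ein_assoc)
  then obtain R where R: "is_drazin N B 1 R"
    using is_drazin_ein_tpow[OF B(1) P] by blast
  then have "tstar R = R"
    using is_drazin_unique[OF B(1)] is_drazin_tstar[OF B(1) R] B(2) by simp
  then show ?thesis
    using R by blast
qed

definition is_mpinv :: "nat list \<Rightarrow> tens2 \<Rightarrow> tens2 \<Rightarrow> bool" where
  "is_mpinv N D Y \<longleftrightarrow> tensor2 N Y \<and>
      ein N (ein N D Y) D = D \<and> ein N (ein N Y D) Y = Y \<and>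
      tstar (ein N D Y) = ein N D Y \<and> tstar (ein N Y D) = ein N Y D"

lemma is_mpinv_unique:
  assumes Y: "is_mpinv N A Y" and Z: "is_mpinv N A Z"
  shows "Y = Z"
proof -
  have y1: "ein N A (ein N Y A) = A" and y2: "ein N Y (ein N A Y) = Y"
    and y3: "tstar (ein N A Y) = ein N A Y" and y4: "tstar (ein N Y A) = ein N Y A"
    using Y by (auto simp: is_mpinv_def ein_assoc)
  have z1: "ein N A (ein N Z A) = A" and z2: "ein N Z (ein N A Z) = Z"
    and z3: "tstar (ein N A Z) = ein N A Z" and z4: "tstar (ein N Z A) = ein N Z A"
    using Z by (auto simp: is_mpinv_def ein_assoc)
  have A_star_right: "tstar A = ein N (tstar A) (ein N A Z)"
    using arg_cong[OF z1, of tstar] z3 by (simp add: tstar_ein ein_assoc)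
  have A_star_left: "tstar A = ein N (ein N Y A) (tstar A)"
    using arg_cong[OF y1, of tstar] y4 by (simp add: tstar_ein)
  have "Y = ein N Y (ein N A Z)"
  proof -
    have "Y = ein N Y (ein N (tstar Y) (tstar A))"
      using y2 y3 by (simp add: tstar_ein)
    also have "\<dots> = ein N (ein N Y (tstar (ein N A Y))) (ein N A Z)"
      by (subst A_star_right) (simp add: tstar_ein ein_assoc)
    finally show ?thesis
      using y2 y3 by simp
  qed
  moreover have "Z = ein N Y (ein N A Z)"
  proof -
    have Z_eq: "Z = ein N (tstar A) (ein N (tstar Z) Z)"
      using z2 z4 by (simp add: tstar_ein flip: ein_assoc)
    also have "\<dots> = ein N Y (ein N A (ein N (tstar A) (ein N (tstar Z) Z)))"
      by (subst (1) A_star_left) (simp add: ein_assoc)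
    finally show ?thesis
      by (simp only: Z_eq[symmetric])
  qed
  ultimately show ?thesis
    by simp
qed

lemma ex_is_mpinv:
  assumes A: "tensor2 N A"
  shows "\<exists>X. is_mpinv N A X"
proof -
  define B where "B = ein N (tstar A) A"
  have B: "tensor2 N B" "tstar B = B"
    by (simp_all add: B_def tstar_ein)
  obtain R where R: "is_drazin N B 1 R" and R_herm: "tstar R = R"
    using ex_hermitian_group_inverse[OF B] by blast
  have RBB: "ein N R (ein N B B) = B" and RBR: "ein N (ein N R B) R = R"
    and BR: "ein N B R = ein N R B"
    using R B(1) by (auto simp: is_drazin_def tpow_Suc ein_tid_right ein_assoc)
  have "ein N (ein N (tstar A) A) (tminus (ein N R B) (tid N)) = 0"
    using RBB BR by (simp add: B_def[symmetric] ein_tminus_right ein_tid_right[OF B(1)] tminus_eq_0_iff)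
      (simp add: ein_assoc[symmetric])
  then have "ein N A (tminus (ein N R B) (tid N)) = 0"
    by (rule ein_tstar_cancel[OF A])
  then have ARB: "ein N A (ein N R B) = A"
    by (simp add: ein_tminus_right ein_tid_right[OF A] tminus_eq_0_iff)
  define X where "X = ein N R (tstar A)"
  have XA: "ein N X A = ein N R B"
    by (simp add: X_def B_def ein_assoc)
  have "ein N (ein N A X) A = A"
    using ARB by (simp add: XA ein_assoc)
  moreover have "ein N (ein N X A) X = X"
    unfolding XA using RBR by (simp add: X_def flip: ein_assoc)
  moreover have "tstar (ein N A X) = ein N A X"
    using R_herm by (simp add: X_def tstar_ein ein_assoc)
  moreover have "tstar (ein N X A) = ein N X A"
    using R_herm B(2) BR by (simp add: XA tstar_ein)
  moreover have "tensor2 N X"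
    by (simp add: X_def)
  ultimately show ?thesis
    unfolding is_mpinv_def by blast
qed

lemma is_mpinv_mpinv:
  assumes "tensor2 N A"
  shows "is_mpinv N A (mpinv N A)"
proof -
  have "\<exists>!Y. is_mpinv N A Y"
    using ex_is_mpinv[OF assms] is_mpinv_unique by blast
  then show ?thesis
    unfolding mpinv_def is_mpinv_def[symmetric] by (rule theI')
qed

section \<open>Solutions of the multilinear system\<close>

lemma tpow_ein_inner_inverse:
  assumes D: "tensor2 N D" and M: "ein N (ein N D M) D = D" and G: "is_drazin N D k G"
  shows "ein N (tpow N D k) (ein N M D) = tpow N D k"
proof -
  have Dk: "tpow N D k = ein N G (ein N (tpow N D k) D)"
    using G by (simp add: is_drazin_def tpow_Suc_right[OF D] flip: ein_assoc)
  then have "ein N (tpow N D k) (ein N M D) = ein N G (ein N (tpow N D k) (ein N (ein N D M) D))"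
    by (metis ein_assoc)
  then show ?thesis
    using M Dk by simp
qed

lemma is_drazin_ein_factor:
  assumes D: "tensor2 N D" and G: "is_drazin N D k G"
  shows "ein N G D = ein N (ein N (tpow N G (Suc k)) D) (tpow N D k)"
proof -
  have G': "tensor2 N G" "ein N (ein N G D) G = G" "ein N D G = ein N G D"
    using G by (auto simp: is_drazin_def)
  have "ein N G D = ein N (tpow N G (Suc k)) (ein N (tpow N D k) D)"
    by (subst eq_ein_tpow_if_outer_inverse[OF G'(1) D G'(2,3)]) (simp add: ein_assoc)
  then show ?thesis
    by (simp add: ein_tpow_commute_self[OF D] ein_assoc)
qed

lemma solution_set_tpow_system:
  assumes D: "tensor2 N D" and M: "ein N (ein N D M) D = D" and G: "is_drazin N D k G"
  defines "C \<equiv> ein N (ein N (ein N (ein N M D) G) D) M"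
  shows "{Z. tensor1 N Z \<and> einv N (tpow N D k) Z = einv N (tpow N D k) (einv N M B)}
       = {tadd1 (einv N C B) (einv N (tminus (tid N) (ein N C D)) Q) | Q. tensor1 N Q}"
proof -
  have G': "tensor2 N G" "ein N G (tpow N D (Suc k)) = tpow N D k" "ein N D G = ein N G D"
    using G by (auto simp: is_drazin_def)
  have DkC: "ein N (tpow N D k) C = ein N (tpow N D k) M"
  proof -
    have "ein N (tpow N D k) C = ein N (ein N G (ein N (tpow N D k) D)) M"
      using tpow_ein_inner_inverse[OF D M G] ein_tpow_commute[OF D G'(1,3)]
      by (simp add: C_def) (metis ein_assoc)
    then show ?thesis
      using G'(2) by (simp add: tpow_Suc_right[OF D])
  qed
  have DkCD: "ein N (tpow N D k) (ein N C D) = tpow N D k"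
    using DkC tpow_ein_inner_inverse[OF D M G] by (simp flip: ein_assoc)
  show ?thesis
  proof (intro set_eqI iffI)
    fix Z
    assume "Z \<in> {Z. tensor1 N Z \<and> einv N (tpow N D k) Z = einv N (tpow N D k) (einv N M B)}"
    then have Z: "tensor1 N Z" "einv N (tpow N D k) Z = einv N (tpow N D k) (einv N M B)"
      by auto
    have DMD: "einv N D (einv N M (einv N D Z)) = einv N D Z"
      using M by (metis einv_ein)
    have "einv N C B = einv N (ein N M D) (einv N (ein N G D) (einv N M B))"
      by (simp add: C_def einv_ein)
    also have "\<dots> = einv N (ein N M D) (einv N (ein N G D) Z)"
      by (simp only: is_drazin_ein_factor[OF D G] einv_ein Z(2))
    also have "\<dots> = einv N (ein N C D) Z"
      by (simp add: C_def einv_ein DMD)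
    finally have "einv N C B = einv N (ein N C D) Z" .
    then have "Z = tadd1 (einv N C B) (einv N (tminus (tid N) (ein N C D)) Z)"
      by (simp add: fun_eq_iff tadd1_def einv_tminus einv_tid[OF Z(1)])
    then show "Z \<in> {tadd1 (einv N C B) (einv N (tminus (tid N) (ein N C D)) Q) | Q. tensor1 N Q}"
      using Z(1) by blast
  next
    fix Z
    assume "Z \<in> {tadd1 (einv N C B) (einv N (tminus (tid N) (ein N C D)) Q) | Q. tensor1 N Q}"
    then obtain Q where Z: "Z = tadd1 (einv N C B) (einv N (tminus (tid N) (ein N C D)) Q)"
      by blast
    have "ein N (tpow N D k) (tminus (tid N) (ein N C D)) = 0"
      by (simp add: ein_tminus_right ein_tid_right DkCD tminus_eq_0_iff)
    then have "einv N (tpow N D k) Z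
        = tadd1 (einv N (ein N (tpow N D k) M) B) (einv N 0 Q)"
      by (simp only: Z einv_tadd1 DkC flip: einv_ein)
    then have "einv N (tpow N D k) Z = einv N (tpow N D k) (einv N M B)"
      by (simp add: tadd1_def einv_ein)
    then show "Z \<in> {Z. tensor1 N Z \<and> einv N (tpow N D k) Z = einv N (tpow N D k) (einv N M B)}"
      by (simp add: Z tensor1_tadd1)
  qed
qed

theorem mainTheorem13:
  fixes N :: "nat list" and D :: tens2 and B :: tens1 and k :: nat
  assumes "\<forall>n\<in>set N. 0 < n"
    and "tensor2 N D" and "tensor1 N B"
    and "tind N D = k"
  shows "{Z. tensor1 N Z \<and>
            einv N (tpow N D k) Z = einv N (tpow N D k) (einv N (mpinv N D) B)}
       = {tadd1 (einv N (cmp N D) B)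
                (einv N (tminus (tid N) (ein N (cmp N D) D)) Q) | Q. tensor1 N Q}"
proof -
  have "is_mpinv N D (mpinv N D)"
    using is_mpinv_mpinv[OF assms(2)] .
  moreover have "is_drazin N D k (drazin N D)"
    using is_drazin_drazin[OF assms(2)] assms(4) by simp
  ultimately show ?thesis
    unfolding cmp_def is_mpinv_def by (intro solution_set_tpow_system[OF assms(2)]) auto
qed

end
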